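(* Let $G=(V,E)$ be an undirected graph (not necessarily locally finite), let $X\subset V$ with $\mathrm{width}(X)<+\infty$, let $Y=V\setminus X$, and let $f\in L^\infty(X)$ and $g\in L^\infty(Y)$ be bounded real-valued functions. Then the Dirichlet problem \[ \begin{cases}\Delta_\infty u(x)=f(x), & x\in X,\\ u(x)=g(x), & x\in Y,\end{cases} \] admits a bounded solution $u:V\to\mathbb{R}$. Moreover, if $f\ge 0$ on $X$ or $f\le 0$ on $X$, then this bounded solution is unique (i.e. any two bounded solutions coincide).
   Context: For $x,y\in V$ write $x\sim y$ if $\{x,y\}\in E$. The combinatorial distance $d(A,B)$ between subsets $A,B\subset V$ is the infimum of the lengths $n$ of paths $A\ni x_0\sim x_1\sim\cdots\sim x_n\in B$ (and $d(A,x)=d(A,\{x\})$). The boundary of $X$ is $\partial X=\{y\notin X:\ y\sim x \text{ for some } x\in X\}$, and $\mathrm{width}(X)=\sup_{x\in X} d(\partial X,x)$. For $u:V\to\mathbb{R}$ the discrete infinity Laplacian is $\Delta_\infty u(x)=\inf_{y\sim x}u(y)+\sup_{y\sim x}u(y)-2u(x)$. *)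

theory Defs
  imports Complex_Main "HOL-Library.Extended_Nat"
begin

text \<open>A graph G = (V,E) is modelled with vertex set V = UNIV of type 'a and
 adjacency relation E (x ~ y iff E x y), required symmetric and irreflexive.
 No local finiteness is assumed.\<close>

definition is_path :: "('a \<Rightarrow> 'a \<Rightarrow> bool) \<Rightarrow> (nat \<Rightarrow> 'a) \<Rightarrow> nat \<Rightarrow> bool" where
  "is_path E p n \<longleftrightarrow> (\<forall>i<n. E (p i) (p (Suc i)))"

definition gdist :: "('a \<Rightarrow> 'a \<Rightarrow> bool) \<Rightarrow> 'a set \<Rightarrow> 'a set \<Rightarrow> enat" where
  "gdist E A B = Inf {enat n | n. \<exists>p. p 0 \<in> A \<and> p n \<in> B \<and> is_path E p n}"

definition gboundary :: "('a \<Rightarrow> 'a \<Rightarrow> bool) \<Rightarrow> 'a set \<Rightarrow> 'a set" where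
  "gboundary E X = {y. y \<notin> X \<and> (\<exists>x\<in>X. E y x)}"

definition gwidth :: "('a \<Rightarrow> 'a \<Rightarrow> bool) \<Rightarrow> 'a set \<Rightarrow> enat" where
  "gwidth E X = (SUP x\<in>X. gdist E (gboundary E X) {x})"

definition inf_laplacian :: "('a \<Rightarrow> 'a \<Rightarrow> bool) \<Rightarrow> ('a \<Rightarrow> real) \<Rightarrow> 'a \<Rightarrow> real" where
  "inf_laplacian E u x =
     (INF y\<in>{y. E x y}. u y) + (SUP y\<in>{y. E x y}. u y) - 2 * u x"

definition bounded_fun :: "('a \<Rightarrow> real) \<Rightarrow> bool" where
  "bounded_fun u \<longleftrightarrow> (\<exists>M. \<forall>x. \<bar>u x\<bar> \<le> M)"

definition bounded_on :: "'a set \<Rightarrow> ('a \<Rightarrow> real) \<Rightarrow> bool" where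
  "bounded_on S u \<longleftrightarrow> (\<exists>M. \<forall>x\<in>S. \<bar>u x\<bar> \<le> M)"

definition dirichlet_solution ::
  "('a \<Rightarrow> 'a \<Rightarrow> bool) \<Rightarrow> 'a set \<Rightarrow> ('a \<Rightarrow> real) \<Rightarrow> ('a \<Rightarrow> real) \<Rightarrow> ('a \<Rightarrow> real) \<Rightarrow> bool" where
  "dirichlet_solution E X f g u \<longleftrightarrow>
     bounded_fun u \<and> (\<forall>x\<in>X. inf_laplacian E u x = f x) \<and> (\<forall>y\<in>-X. u y = g y)"

end

theory Submission
  imports Defs
begin

text \<open>Existence is Perron's method: the solution is the supremum of all bounded subsolutions
  lying below a bounded supersolution. Finite width means every vertex lies within a bounded
  number N of steps from V \ X, and a convex quadratic in this depth provides the barriers.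

  Uniqueness for f \<ge> 0 is a comparison principle. Suppose sup (u - v) > 0 and let B bound |u|.
  For small \<eta> > 0, near-maximality of \<Phi> = u - v + \<eta> (u + B)^2 at a point of X forces
  near-maximality at all of its neighbours; this is where f \<ge> 0 and the convexity of the
  perturbation enter. On V \ X, where u = v, \<Phi> stays below its supremum by a margin, so by
  induction over the layers it does so everywhere, which is absurd. The case f \<le> 0 follows by
  passing to -u, -v.\<close>

lemma bounded_fun_bdd_above: "bounded_fun u \<Longrightarrow> bdd_above (u ` A)"
  unfolding bounded_fun_def by (metis abs_le_D1 bdd_aboveI2)

lemma bounded_fun_bdd_below: "bounded_fun u \<Longrightarrow> bdd_below (u ` A)"
  unfolding bounded_fun_def by (metis abs_le_D2 bdd_belowI2 minus_le_iff)

lemma bounded_fun_uminus: "bounded_fun u \<Longrightarrow> bounded_fun (\<lambda>x. - u x)"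
  unfolding bounded_fun_def by simp

lemma bounded_fun_between:
  assumes "bounded_fun u" "bounded_fun v" "\<And>x. u x \<le> w x" "\<And>x. w x \<le> v x"
  shows "bounded_fun w"
proof -
  obtain Mu Mv where "\<And>x. \<bar>u x\<bar> \<le> Mu" "\<And>x. \<bar>v x\<bar> \<le> Mv"
    using assms(1,2) unfolding bounded_fun_def by blast
  then have "\<bar>w x\<bar> \<le> Mu + Mv" for x
    using assms(3,4)[of x] by (smt (verit))
  then show ?thesis unfolding bounded_fun_def by blast
qed

lemma inf_laplacian_mono:
  assumes "bounded_fun u" "bounded_fun v" "\<And>y. E x y \<Longrightarrow> u y \<le> v y"
  shows "inf_laplacian E u x + 2 * u x \<le> inf_laplacian E v x + 2 * v x"
proof (cases "\<exists>y. E x y")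
  case True
  then have "(INF y\<in>{y. E x y}. u y) \<le> (INF y\<in>{y. E x y}. v y)"
    by (intro cINF_mono) (use assms(3) bounded_fun_bdd_below[OF assms(1)] in auto)
  moreover have "(SUP y\<in>{y. E x y}. u y) \<le> (SUP y\<in>{y. E x y}. v y)"
    by (intro cSUP_mono) (use True assms(3) bounded_fun_bdd_above[OF assms(2)] in auto)
  ultimately show ?thesis unfolding inf_laplacian_def by simp
qed (simp add: inf_laplacian_def)

lemma inf_laplacian_uminus: "inf_laplacian E (\<lambda>y. - u y) x = - inf_laplacian E u x"
proof -
  have "(INF y\<in>A. - u y) = - (SUP y\<in>A. u y)" "(SUP y\<in>A. - u y) = - (INF y\<in>A. u y)"
    for A :: "'a set"
    unfolding Inf_real_def by (simp_all add: image_image)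
  then show ?thesis unfolding inf_laplacian_def by simp
qed

lemma inf_laplacian_fun_upd:
  assumes "\<not> E x x"
  shows "inf_laplacian E (u(x := c)) x = inf_laplacian E u x - 2 * (c - u x)"
proof -
  have "(u(x := c)) ` {y. E x y} = u ` {y. E x y}"
    using assms by (auto intro: image_cong)
  then show ?thesis unfolding inf_laplacian_def by (simp add: algebra_simps)
qed

lemma dirichlet_solution_uminus:
  "dirichlet_solution E X f g u \<Longrightarrow>
     dirichlet_solution E X (\<lambda>x. - f x) (\<lambda>x. - g x) (\<lambda>x. - u x)"
  unfolding dirichlet_solution_def by (simp add: bounded_fun_uminus inf_laplacian_uminus)

section \<open>Layers around the complement of X\<close>

fun layer :: "('a \<Rightarrow> 'a \<Rightarrow> bool) \<Rightarrow> 'a set \<Rightarrow> nat \<Rightarrow> 'a set" where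
  "layer E X 0 = - X"
| "layer E X (Suc k) = layer E X k \<union> {x\<in>X. \<exists>z. E x z \<and> z \<in> layer E X k}"

lemma layer_mono: "k \<le> m \<Longrightarrow> layer E X k \<subseteq> layer E X m"
  by (induction m) (auto simp: le_Suc_eq)

lemma is_path_end_in_layer:
  assumes sym: "\<And>x y. E x y \<Longrightarrow> E y x"
    and "is_path E p n" "p 0 \<notin> X"
  shows "p n \<in> layer E X n"
  using assms(2)
proof (induction n)
  case (Suc n)
  then have "p n \<in> layer E X n" unfolding is_path_def by simp
  moreover have "E (p (Suc n)) (p n)"
    using Suc.prems sym unfolding is_path_def by simp
  ultimately show ?case using layer_mono[of 0 n E X] by (cases "p (Suc n) \<in> X") auto
qed (simp add: assms(3))

lemma gwidth_finite_imp_layer_UNIV: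
  assumes sym: "\<And>x y. E x y \<Longrightarrow> E y x"
    and width: "gwidth E X < \<infinity>"
  obtains N where "layer E X N = UNIV"
proof -
  obtain N where N: "gwidth E X = enat N" using width by (cases "gwidth E X") auto
  have "x \<in> layer E X N" if "x \<in> X" for x
  proof -
    have "gdist E (gboundary E X) {x} < enat (Suc N)"
      using SUP_upper[OF that, of "\<lambda>x. gdist E (gboundary E X) {x}"] N
      unfolding gwidth_def by (simp add: order_le_less_trans)
    then obtain n p where "n \<le> N" "p 0 \<in> gboundary E X" "p n = x" "is_path E p n"
      unfolding gdist_def Inf_less_iff by (auto simp: less_Suc_eq_le)
    then show ?thesis
      using is_path_end_in_layer[of E, OF sym] layer_mono[of n N E X] unfolding gboundary_def by blast
  qed
  then have "layer E X N = UNIV"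
    using layer_mono[of 0 N E X] by auto
  then show thesis by (rule that)
qed

definition depth :: "('a \<Rightarrow> 'a \<Rightarrow> bool) \<Rightarrow> 'a set \<Rightarrow> 'a \<Rightarrow> nat" where
  "depth E X x = (LEAST k. x \<in> layer E X k)"

lemma depth_le_if_in_layer: "x \<in> layer E X k \<Longrightarrow> depth E X x \<le> k"
  unfolding depth_def by (rule Least_le)

context
  fixes E :: "'a \<Rightarrow> 'a \<Rightarrow> bool" and X :: "'a set" and N :: nat
  assumes layer_N: "layer E X N = UNIV"
begin

lemma depth_le: "depth E X x \<le> N"
  unfolding depth_def by (rule Least_le) (simp add: layer_N)

lemma in_layer_depth: "x \<in> layer E X (depth E X x)"
  unfolding depth_def by (rule LeastI[of _ N]) (simp add: layer_N)

lemma depth_eq_0_iff: "depth E X x = 0 \<longleftrightarrow> x \<notin> X"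
  using in_layer_depth[of x] depth_le_if_in_layer[of x E X 0] by fastforce

lemma depth_descent:
  assumes "x \<in> X"
  obtains z where "E x z" "depth E X z < depth E X x"
proof -
  obtain k where k: "depth E X x = Suc k"
    using assms depth_eq_0_iff not0_implies_Suc by blast
  then have "x \<notin> layer E X k" "x \<in> layer E X (Suc k)"
    using depth_le_if_in_layer[of x E X k] in_layer_depth[of x] by auto
  then obtain z where "E x z" "z \<in> layer E X k" by auto
  then show thesis using that depth_le_if_in_layer[of z E X k] k by simp
qed

lemma depth_neighbour:
  assumes sym: "\<And>x y. E x y \<Longrightarrow> E y x" and "E x y"
  shows "depth E X y \<le> Suc (depth E X x)"
proof -
  have "y \<in> layer E X (Suc (depth E X x))"
    using in_layer_depth[of x] sym[OF \<open>E x y\<close>] layer_mono[of 0 "depth E X x" E X]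
    by (cases "y \<in> X") auto
  then show ?thesis by (rule depth_le_if_in_layer)
qed

lemma subsolution_barrier:
  fixes f :: "'a \<Rightarrow> real"
  assumes sym: "\<And>x y. E x y \<Longrightarrow> E y x"
    and "F \<ge> 0" "\<And>x. x \<in> X \<Longrightarrow> f x \<le> F"
  obtains a where "bounded_fun a" "\<And>x. x \<in> X \<Longrightarrow> f x \<le> inf_laplacian E a x"
    "\<And>x. a x \<le> c"
proof -
  define \<phi> :: "nat \<Rightarrow> real" where
    "\<phi> k = c - F/2 * (real N + 1)^2 + F/2 * (real N + 1 - real k)^2" for k
  define a where "a x = \<phi> (depth E X x)" for x
  have \<phi>_antimono: "\<phi> k \<le> \<phi> j" if "j \<le> k" "k \<le> N + 1" for j k
  proof -
    have "(real N + 1 - real k)^2 \<le> (real N + 1 - real j)^2"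
      using that by (intro power_mono) auto
    then show ?thesis unfolding \<phi>_def using \<open>F \<ge> 0\<close> by (simp add: mult_left_mono)
  qed
  have a_le: "a x \<le> c" for x
    using \<phi>_antimono[of 0 "depth E X x"] depth_le[of x] unfolding a_def by (simp add: \<phi>_def)
  have a_ge: "\<phi> (N + 1) \<le> a x" for x
    using \<phi>_antimono[of "depth E X x" "N + 1"] depth_le[of x] unfolding a_def by simp
  have bounded: "bounded_fun a"
    by (rule bounded_fun_between[of "\<lambda>_. \<phi> (N + 1)" "\<lambda>_. c"])
      (use a_le a_ge in \<open>auto simp: bounded_fun_def\<close>)
  have "f x \<le> inf_laplacian E a x" if x: "x \<in> X" for x
  proof -
    define k where "k = depth E X x"
    obtain z where z: "E x z" "depth E X z < k"
      using depth_descent[OF x] unfolding k_def by blast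
    have k: "1 \<le> k" "k \<le> N" using z(2) depth_le[of x] unfolding k_def by auto
    have "\<phi> (k + 1) \<le> (INF y\<in>{y. E x y}. a y)"
    proof (rule cINF_greatest)
      fix y assume "y \<in> {y. E x y}"
      then have "depth E X y \<le> k + 1" using depth_neighbour[OF sym] unfolding k_def by simp
      then show "\<phi> (k + 1) \<le> a y" unfolding a_def using \<phi>_antimono k by simp
    qed (use z in auto)
    moreover have "\<phi> (k - 1) \<le> (SUP y\<in>{y. E x y}. a y)"
    proof (rule cSUP_upper2)
      show "bdd_above (a ` {y. E x y})" using bounded by (rule bounded_fun_bdd_above)
      show "\<phi> (k - 1) \<le> a z" unfolding a_def using \<phi>_antimono z k by simp
    qed (use z in simp)
    moreover have "\<phi> (k + 1) + \<phi> (k - 1) - 2 * \<phi> k = F"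
      using k unfolding \<phi>_def by (simp add: power2_eq_square algebra_simps)
    ultimately show ?thesis
      unfolding inf_laplacian_def a_def k_def[symmetric] using assms(3)[OF x] by linarith
  qed
  then show thesis using that bounded a_le by blast
qed

end

section \<open>Perron's method\<close>

definition perron_family ::
  "('a \<Rightarrow> 'a \<Rightarrow> bool) \<Rightarrow> 'a set \<Rightarrow> ('a \<Rightarrow> real) \<Rightarrow> ('a \<Rightarrow> real) \<Rightarrow> ('a \<Rightarrow> real) \<Rightarrow> ('a \<Rightarrow> real) set"
  where
  "perron_family E X f g U = {u. bounded_fun u \<and> (\<forall>x\<in>X. f x \<le> inf_laplacian E u x)
     \<and> (\<forall>y\<in>-X. u y \<le> g y) \<and> (\<forall>x. u x \<le> U x)}"

definition perron_solution ::
  "('a \<Rightarrow> 'a \<Rightarrow> bool) \<Rightarrow> 'a set \<Rightarrow> ('a \<Rightarrow> real) \<Rightarrow> ('a \<Rightarrow> real) \<Rightarrow> ('a \<Rightarrow> real) \<Rightarrow> 'a \<Rightarrow> real"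
  where "perron_solution E X f g U x = (SUP u\<in>perron_family E X f g U. u x)"

context
  fixes E :: "'a \<Rightarrow> 'a \<Rightarrow> bool" and X :: "'a set" and f g U :: "'a \<Rightarrow> real"
  assumes U_bounded: "bounded_fun U"
    and family_nonempty: "perron_family E X f g U \<noteq> {}"
begin

abbreviation (input) "\<P> \<equiv> perron_family E X f g U"
abbreviation (input) "p \<equiv> perron_solution E X f g U"

lemma perron_solution_upper: "u \<in> \<P> \<Longrightarrow> u x \<le> p x"
  unfolding perron_solution_def
  by (rule cSUP_upper) (auto intro!: bdd_aboveI2[where M = "U x"] simp: perron_family_def)

lemma perron_solution_le: "p x \<le> U x"
  unfolding perron_solution_def
  by (rule cSUP_least[OF family_nonempty]) (simp add: perron_family_def)

lemma perron_solution_bounded: "bounded_fun p"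
proof -
  obtain a where a: "a \<in> \<P>" using family_nonempty by blast
  then have "bounded_fun a" unfolding perron_family_def by simp
  then show ?thesis
    using U_bounded perron_solution_upper[OF a] perron_solution_le by (rule bounded_fun_between)
qed

lemma perron_solution_in_family: "p \<in> \<P>"
proof -
  have "f x \<le> inf_laplacian E p x" if x: "x \<in> X" for x
  proof -
    have "u x \<le> p x + (inf_laplacian E p x - f x) / 2" if u: "u \<in> \<P>" for u
    proof -
      have "bounded_fun u" "f x \<le> inf_laplacian E u x"
        using u x unfolding perron_family_def by auto
      moreover have "inf_laplacian E u x + 2 * u x \<le> inf_laplacian E p x + 2 * p x"
        using perron_solution_bounded perron_solution_upper[OF u]
        by (intro inf_laplacian_mono) (simp_all add: \<open>bounded_fun u\<close>)
      ultimately show ?thesis by (simp add: field_simps)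
    qed
    then have "p x \<le> p x + (inf_laplacian E p x - f x) / 2"
      unfolding perron_solution_def[of E X f g U x] by (intro cSUP_least[OF family_nonempty]) auto
    then show ?thesis by (simp add: field_simps)
  qed
  moreover have "p y \<le> g y" if "y \<notin> X" for y
    unfolding perron_solution_def
    by (rule cSUP_least[OF family_nonempty]) (use that in \<open>auto simp: perron_family_def\<close>)
  ultimately show ?thesis
    unfolding perron_family_def using perron_solution_bounded perron_solution_le by auto
qed

lemma perron_solution_boundary:
  assumes g_le_U: "\<And>y. y \<notin> X \<Longrightarrow> g y \<le> U y" and y: "y \<notin> X"
  shows "p y = g y"
proof -
  define q where "q z = (if z \<in> X then p z else g z)" for z
  have p_in: "p \<in> \<P>" by (rule perron_solution_in_family)
  then have p_le_q: "p z \<le> q z" for z unfolding q_def perron_family_def by auto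
  have q_le_U: "q z \<le> U z" for z unfolding q_def using perron_solution_le g_le_U by simp
  have q_bounded: "bounded_fun q"
    using perron_solution_bounded U_bounded p_le_q q_le_U by (rule bounded_fun_between)
  have "f x \<le> inf_laplacian E q x" if x: "x \<in> X" for x
  proof -
    have "inf_laplacian E p x + 2 * p x \<le> inf_laplacian E q x + 2 * q x"
      using perron_solution_bounded q_bounded p_le_q by (rule inf_laplacian_mono)
    then show ?thesis using p_in x unfolding perron_family_def q_def by auto
  qed
  then have "q \<in> \<P>" unfolding perron_family_def using q_bounded q_le_U by (simp add: q_def)
  then have "g y \<le> p y" using perron_solution_upper[of q y] y by (simp add: q_def)
  moreover have "p y \<le> g y" using p_in y unfolding perron_family_def by simp
  ultimately show ?thesis by simp
qed

text \<open>Otherwise raising p at x alone would give a larger member of the family.\<close>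
lemma perron_solution_supersolution:
  assumes irrefl: "\<not> E x x" and U_super: "inf_laplacian E U x \<le> f x" and x: "x \<in> X"
  shows "inf_laplacian E p x \<le> f x"
proof (rule ccontr)
  assume "\<not> ?thesis"
  then have gap: "f x < inf_laplacian E p x" by simp
  have p_in: "p \<in> \<P>" by (rule perron_solution_in_family)
  have "p x < U x"
  proof (rule ccontr)
    assume "\<not> p x < U x"
    then have "p x = U x" using perron_solution_le[of x] by simp
    moreover have "inf_laplacian E p x + 2 * p x \<le> inf_laplacian E U x + 2 * U x"
      using perron_solution_bounded U_bounded perron_solution_le by (rule inf_laplacian_mono)
    ultimately show False using gap U_super by simp
  qed
  define t where "t = min ((inf_laplacian E p x - f x) / 2) (U x - p x)"
  have t: "0 < t" "t \<le> (inf_laplacian E p x - f x) / 2" "t \<le> U x - p x"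
    using gap \<open>p x < U x\<close> unfolding t_def by (simp_all only: min.cobounded1 min.cobounded2) simp
  define q where "q = p(x := p x + t)"
  have p_le_q: "p z \<le> q z" for z using t unfolding q_def by simp
  have q_le_U: "q z \<le> U z" for z using t perron_solution_le[of z] unfolding q_def by simp
  have q_bounded: "bounded_fun q"
    using perron_solution_bounded U_bounded p_le_q q_le_U by (rule bounded_fun_between)
  have "f z \<le> inf_laplacian E q z" if z: "z \<in> X" for z
  proof (cases "z = x")
    case True
    then show ?thesis using t inf_laplacian_fun_upd[of E x p "p x + t", OF irrefl] by (simp add: q_def)
  next
    case False
    have "inf_laplacian E p z + 2 * p z \<le> inf_laplacian E q z + 2 * q z"
      using perron_solution_bounded q_bounded p_le_q by (rule inf_laplacian_mono)
    then show ?thesis using p_in z False unfolding perron_family_def q_def by auto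
  qed
  then have "q \<in> \<P>"
    using p_in q_bounded q_le_U x unfolding perron_family_def q_def by auto
  then have "q x \<le> p x" by (rule perron_solution_upper)
  then show False using t by (simp add: q_def)
qed

end

lemma perron_method:
  assumes irrefl: "\<And>x. \<not> E x x"
    and a: "bounded_fun a" "\<And>x. x \<in> X \<Longrightarrow> f x \<le> inf_laplacian E a x"
      "\<And>y. y \<notin> X \<Longrightarrow> a y \<le> g y"
    and U: "bounded_fun U" "\<And>x. x \<in> X \<Longrightarrow> inf_laplacian E U x \<le> f x"
      "\<And>y. y \<notin> X \<Longrightarrow> g y \<le> U y"
    and a_le_U: "\<And>x. a x \<le> U x"
  shows "dirichlet_solution E X f g (perron_solution E X f g U)"
proof -
  have "a \<in> perron_family E X f g U" unfolding perron_family_def using a a_le_U by auto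
  then have nonempty: "perron_family E X f g U \<noteq> {}" by blast
  have "f x \<le> inf_laplacian E (perron_solution E X f g U) x" if "x \<in> X" for x
    using perron_solution_in_family[OF U(1) nonempty] that unfolding perron_family_def by simp
  then show ?thesis
    unfolding dirichlet_solution_def
    using perron_solution_bounded[OF U(1) nonempty] perron_solution_boundary[OF U(1) nonempty U(3)]
      perron_solution_supersolution[OF U(1) nonempty irrefl U(2)]
    by (auto intro: antisym)
qed

section \<open>Comparison principle for nonnegative right-hand sides\<close>

lemma square_shift_lower_bound:
  fixes t \<gamma> r B :: real
  assumes "0 \<le> t" "t \<le> 2 * B" "- r \<le> \<gamma>" "0 \<le> r"
  shows "- 4 * B * r \<le> (t + \<gamma>)^2 - t^2"
proof -
  have "- (t * r) \<le> t * \<gamma>" using mult_left_mono[OF assms(3,1)] by simp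
  moreover have "t * r \<le> 2 * B * r" using assms(2,4) by (rule mult_right_mono)
  moreover have "(t + \<gamma>)^2 - t^2 = 2 * (t * \<gamma>) + \<gamma>^2" by (simp add: power2_eq_square algebra_simps)
  ultimately show ?thesis using zero_le_power2[of \<gamma>] by linarith
qed

context
  fixes E :: "'a \<Rightarrow> 'a \<Rightarrow> bool" and u v :: "'a \<Rightarrow> real" and x :: 'a and B \<eta> \<delta> \<rho> P :: real
  assumes bounded: "bounded_fun u" "bounded_fun v"
    and same_lap: "inf_laplacian E u x = inf_laplacian E v x"
    and lap_nonneg: "0 \<le> inf_laplacian E u x"
    and ux: "\<bar>u x\<bar> \<le> B" and \<eta>: "0 < \<eta>"
    and \<delta>: "0 < \<delta>" "\<delta> \<le> \<rho>" "\<delta> * (4 / \<eta> + 4 * B) \<le> \<rho>^2"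
    and le_P: "\<And>y. u y - v y + \<eta> * (u y + B)^2 \<le> P"
    and near_P: "P - \<delta> < u x - v x + \<eta> * (u x + B)^2"
begin

lemma near_max_extremal_neighbours:
  assumes "E x z"
  obtains yS yI where "E x yS" "(SUP y\<in>{y. E x y}. u y) < u yS + \<delta>" "\<bar>u yS - u x\<bar> < \<rho>"
    "E x yI" "v yI < (INF y\<in>{y. E x y}. v y) + \<delta>" "\<bar>u yI - u x\<bar> < \<rho>"
proof -
  define Su Iu Sv Iv where "Su = (SUP y\<in>{y. E x y}. u y)" "Iu = (INF y\<in>{y. E x y}. u y)"
    "Sv = (SUP y\<in>{y. E x y}. v y)" "Iv = (INF y\<in>{y. E x y}. v y)"
  have nonempty: "{y. E x y} \<noteq> {}" using assms by blast
  obtain yS where yS: "E x yS" "Su < u yS + \<delta>"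
    using less_cSUP_iff[OF nonempty bounded_fun_bdd_above[OF bounded(1)], of "Su - \<delta>"] \<delta>(1)
    unfolding Su_Iu_Sv_Iv_def by auto
  obtain yI where yI: "E x yI" "v yI < Iv + \<delta>"
    using cINF_less_iff[OF nonempty bounded_fun_bdd_below[OF bounded(2)], of "Iv + \<delta>"] \<delta>(1)
    unfolding Su_Iu_Sv_Iv_def by auto
  have Iu: "Iu \<le> u yI"
    unfolding Su_Iu_Sv_Iv_def by (rule cINF_lower) (use yI(1) bounded_fun_bdd_below bounded in auto)
  have Sv: "v yS \<le> Sv"
    unfolding Su_Iu_Sv_Iv_def by (rule cSUP_upper) (use yS(1) bounded_fun_bdd_above bounded in auto)
  have lap: "Iu + Su - 2 * u x = inf_laplacian E u x" "Iv + Sv - 2 * v x = inf_laplacian E u x"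
    using same_lap unfolding Su_Iu_Sv_Iv_def inf_laplacian_def by simp_all
  define t \<alpha> \<beta> where "t = u x + B" "\<alpha> = u yS - u x" "\<beta> = u yI - u x"
  have t: "0 \<le> t" "t \<le> 2 * B" using ux unfolding t_\<alpha>_\<beta>_def by auto
  have sum_gt: "- \<delta> < \<alpha> + \<beta>"
    using Iu yS(2) lap(1) lap_nonneg unfolding t_\<alpha>_\<beta>_def by linarith
  txt \<open>Both extremal neighbours are nearly maximal for the perturbed difference,
    which makes the convex perturbation nearly flat there.\<close>
  have "\<eta> * ((t + \<alpha>)^2 + (t + \<beta>)^2 - 2 * t^2) < 4 * \<delta>"
    using le_P[of yS] le_P[of yI] near_P Iu Sv yS(2) yI(2) lap
    unfolding t_\<alpha>_\<beta>_def by (simp add: algebra_simps)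
  then have "2 * t * (\<alpha> + \<beta>) + (\<alpha>^2 + \<beta>^2) < 4 * \<delta> / \<eta>"
    using \<eta> by (simp add: pos_less_divide_eq power2_eq_square algebra_simps)
  moreover have "- (t * \<delta>) \<le> t * (\<alpha> + \<beta>)" "t * \<delta> \<le> 2 * B * \<delta>"
    using mult_left_mono[of "- \<delta>" "\<alpha> + \<beta>" t] sum_gt t mult_right_mono[of t "2 * B" \<delta>] \<delta>(1)
    by auto
  ultimately have "\<alpha>^2 + \<beta>^2 < \<delta> * (4 / \<eta> + 4 * B)" by (simp add: algebra_simps)
  then have "\<alpha>^2 < \<rho>^2" "\<beta>^2 < \<rho>^2"
    using \<delta>(3) zero_le_power2[of \<alpha>] zero_le_power2[of \<beta>] by linarith+
  then have "\<bar>\<alpha>\<bar> < \<rho>" "\<bar>\<beta>\<bar> < \<rho>"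
    using power2_less_imp_less[of "\<bar>\<alpha>\<bar>" \<rho>] power2_less_imp_less[of "\<bar>\<beta>\<bar>" \<rho>] \<delta>(1,2)
    by simp_all
  then show thesis using that yS yI unfolding Su_Iu_Sv_Iv_def t_\<alpha>_\<beta>_def by blast
qed

lemma near_max_spreads_to_neighbours:
  assumes "E x z"
  shows "P - (6 + 12 * \<eta> * B) * \<rho> < u z - v z + \<eta> * (u z + B)^2"
proof -
  define Su Iu Sv Iv where "Su = (SUP y\<in>{y. E x y}. u y)" "Iu = (INF y\<in>{y. E x y}. u y)"
    "Sv = (SUP y\<in>{y. E x y}. v y)" "Iv = (INF y\<in>{y. E x y}. v y)"
  obtain yS yI where yS: "Su < u yS + \<delta>" "\<bar>u yS - u x\<bar> < \<rho>"
    and yI: "v yI < Iv + \<delta>" "\<bar>u yI - u x\<bar> < \<rho>"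
    using near_max_extremal_neighbours[OF assms] unfolding Su_Iu_Sv_Iv_def by metis
  have Iu: "Iu \<le> u z"
    unfolding Su_Iu_Sv_Iv_def by (rule cINF_lower) (use assms bounded_fun_bdd_below bounded in auto)
  have Sv: "v z \<le> Sv"
    unfolding Su_Iu_Sv_Iv_def by (rule cSUP_upper) (use assms bounded_fun_bdd_above bounded in auto)
  have lap: "Iu + Su - 2 * u x = inf_laplacian E u x" "Iv + Sv - 2 * v x = inf_laplacian E u x"
    using same_lap unfolding Su_Iu_Sv_Iv_def inf_laplacian_def by simp_all
  have t: "0 \<le> u x + B" "u x + B \<le> 2 * B" using ux by auto
  have "- 4 * B * \<rho> \<le> (u x + B + (u yI - u x))^2 - (u x + B)^2"
    using yI(2) \<delta> by (intro square_shift_lower_bound[OF t]) auto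
  then have sq_yI: "- 4 * B * \<rho> \<le> (u yI + B)^2 - (u x + B)^2" by (simp add: add.commute)
  have "- 4 * B * (\<rho> + \<delta>) \<le> (u x + B + (u z - u x))^2 - (u x + B)^2"
    using Iu yS lap(1) lap_nonneg \<delta> by (intro square_shift_lower_bound[OF t]) auto
  then have sq_z: "- 4 * B * (\<rho> + \<delta>) \<le> (u z + B)^2 - (u x + B)^2" by (simp add: add.commute)
  have "\<eta> * (- 4 * B * \<rho>) + \<eta> * (- 4 * B * (\<rho> + \<delta>))
      \<le> \<eta> * ((u yI + B)^2 - (u x + B)^2) + \<eta> * ((u z + B)^2 - (u x + B)^2)"
    using sq_yI sq_z \<eta> by (intro add_mono mult_left_mono) auto
  moreover have "\<eta> * B * \<delta> \<le> \<eta> * B * \<rho>"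
    using \<eta> \<delta>(2) ux by (intro mult_left_mono) auto
  txt \<open>u z - v z \<ge> Iu - Sv, and by the equal Laplacians Iu - Sv = 2 (u x - v x) - Su + Iv.\<close>
  moreover have "2 * (u x - v x) - (u yI - v yI) - 2 * \<rho> - 2 * \<delta> < u z - v z"
    using Iu Sv lap yS yI by (auto simp: abs_less_iff)
  ultimately show ?thesis
    using le_P[of yI] near_P \<delta>(2) by (simp add: algebra_simps)
qed

end

lemma perturbed_difference_near_max_spreads:
  fixes u v :: "'a \<Rightarrow> real"
  assumes bounded: "bounded_fun u" "bounded_fun v" and B: "\<And>y. \<bar>u y\<bar> \<le> B" and \<eta>: "0 < \<eta>"
    and lap: "\<And>x. x \<in> X \<Longrightarrow> inf_laplacian E u x = inf_laplacian E v x \<and> 0 \<le> inf_laplacian E u x"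
    and le_P: "\<And>y. u y - v y + \<eta> * (u y + B)^2 \<le> P"
    and e: "0 < e"
  shows "\<exists>\<delta>>0. \<forall>x\<in>X. P - \<delta> < u x - v x + \<eta> * (u x + B)^2 \<longrightarrow>
           (\<forall>z. E x z \<longrightarrow> P - e < u z - v z + \<eta> * (u z + B)^2)"
proof -
  have B_nonneg: "0 \<le> B" by (meson B abs_ge_zero order_trans)
  then have pos: "0 < 6 + 12 * \<eta> * B" "0 < 4 / \<eta> + 4 * B"
    using \<eta> by (simp_all add: add_pos_nonneg)
  define \<rho> where "\<rho> = e / (6 + 12 * \<eta> * B)"
  define \<delta> where "\<delta> = min \<rho> (\<rho>^2 / (4 / \<eta> + 4 * B))"
  have \<rho>: "0 < \<rho>" "(6 + 12 * \<eta> * B) * \<rho> = e" unfolding \<rho>_def using e pos by simp_all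
  have \<delta>: "0 < \<delta>" "\<delta> \<le> \<rho>" "\<delta> * (4 / \<eta> + 4 * B) \<le> \<rho>^2"
  proof -
    show "0 < \<delta>" "\<delta> \<le> \<rho>" using \<rho>(1) pos unfolding \<delta>_def by simp_all
    have "\<delta> \<le> \<rho>^2 / (4 / \<eta> + 4 * B)" unfolding \<delta>_def by simp
    then show "\<delta> * (4 / \<eta> + 4 * B) \<le> \<rho>^2" using pos(2) by (simp add: pos_le_divide_eq)
  qed
  have "P - e < u z - v z + \<eta> * (u z + B)^2"
    if "x \<in> X" "P - \<delta> < u x - v x + \<eta> * (u x + B)^2" "E x z" for x z
    using near_max_spreads_to_neighbours[where E = E and u = u and v = v and x = x and z = z
        and P = P and B = B and \<eta> = \<eta> and \<delta> = \<delta> and \<rho> = \<rho>]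
      bounded B \<eta> \<delta> lap[of x] le_P that \<rho>(2) by simp
  then show ?thesis using \<delta>(1) by blast
qed

lemma layer_bounded_away_from_sup:
  fixes \<Phi> :: "'a \<Rightarrow> real"
  assumes outside: "\<And>y. y \<notin> X \<Longrightarrow> \<Phi> y \<le> P - c" and "0 < c"
    and spreads: "\<And>e. 0 < e \<Longrightarrow> \<exists>\<delta>>0. \<forall>x\<in>X. P - \<delta> < \<Phi> x \<longrightarrow> (\<forall>z. E x z \<longrightarrow> P - e < \<Phi> z)"
  shows "\<exists>\<epsilon>>0. \<forall>x\<in>layer E X k. \<Phi> x \<le> P - \<epsilon>"
proof (induction k)
  case 0
  show ?case using outside \<open>0 < c\<close> by auto
next
  case (Suc k)
  then obtain \<epsilon> where \<epsilon>: "0 < \<epsilon>" "\<forall>x\<in>layer E X k. \<Phi> x \<le> P - \<epsilon>" by blast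
  obtain \<delta> where \<delta>: "0 < \<delta>" "\<forall>x\<in>X. P - \<delta> < \<Phi> x \<longrightarrow> (\<forall>z. E x z \<longrightarrow> P - \<epsilon> < \<Phi> z)"
    using spreads[OF \<epsilon>(1)] by blast
  have "\<Phi> x \<le> P - min \<epsilon> \<delta>" if x: "x \<in> layer E X (Suc k)" for x
  proof (cases "x \<in> layer E X k")
    case False
    then obtain z where "x \<in> X" "E x z" "z \<in> layer E X k" using x by auto
    then have "\<not> P - \<delta> < \<Phi> x" using \<delta>(2) \<epsilon>(2) by fastforce
    then show ?thesis by linarith
  qed (use \<epsilon>(2) in fastforce)
  then show ?case using \<epsilon>(1) \<delta>(1) by (intro exI[of _ "min \<epsilon> \<delta>"]) auto
qed

lemma dirichlet_solution_le:
  assumes layer_N: "layer E X N = UNIV"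
    and u: "dirichlet_solution E X f g u" and v: "dirichlet_solution E X f g v"
    and f_nonneg: "\<And>x. x \<in> X \<Longrightarrow> 0 \<le> f x"
  shows "u m \<le> v m"
proof (rule ccontr)
  assume "\<not> u m \<le> v m"
  define c where "c = u m - v m"
  have c: "0 < c" using \<open>\<not> u m \<le> v m\<close> unfolding c_def by simp
  have bounded: "bounded_fun u" "bounded_fun v" and uv_outside: "\<And>y. y \<notin> X \<Longrightarrow> u y = v y"
    and lap: "\<And>x. x \<in> X \<Longrightarrow> inf_laplacian E u x = f x \<and> inf_laplacian E v x = f x"
    using u v unfolding dirichlet_solution_def by auto
  obtain B where B: "\<And>x. \<bar>u x\<bar> \<le> B" "\<And>x. \<bar>v x\<bar> \<le> B"
  proof -
    obtain Bu Bv where "\<And>x. \<bar>u x\<bar> \<le> Bu" "\<And>x. \<bar>v x\<bar> \<le> Bv"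
      using bounded unfolding bounded_fun_def by blast
    then show thesis using that[of "max Bu Bv"] by (meson max.coboundedI1 max.coboundedI2)
  qed
  have B_nonneg: "0 \<le> B" using B(1)[of m] by simp
  define \<eta> where "\<eta> = c / (8 * B^2 + 1)"
  have \<eta>: "0 < \<eta>" "8 * \<eta> * B^2 < c"
    using c B_nonneg unfolding \<eta>_def by (simp_all add: add_pos_nonneg field_simps)
  define \<Phi> where "\<Phi> y = u y - v y + \<eta> * (u y + B)^2" for y
  have perturbation_le: "\<eta> * (u y + B)^2 \<le> \<eta> * (4 * B^2)" for y
  proof -
    have "(u y + B)^2 \<le> (2 * B)^2" using B(1)[of y] by (intro power_mono) auto
    then show ?thesis using \<eta>(1) by (simp add: power_mult_distrib)
  qed
  define P where "P = (SUP y. \<Phi> y)"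
  have "\<Phi> y \<le> 2 * B + \<eta> * (4 * B^2)" for y
    using B[of y] perturbation_le[of y] unfolding \<Phi>_def by (simp add: abs_le_iff)
  then have le_P: "\<Phi> y \<le> P" for y
    unfolding P_def by (intro cSUP_upper bdd_aboveI2) auto
  have "c \<le> \<Phi> m" unfolding \<Phi>_def c_def using \<eta>(1) by simp
  then have outside: "\<Phi> y \<le> P - c / 2" if "y \<notin> X" for y
    using le_P[of m] perturbation_le[of y] \<eta>(2) uv_outside[OF that] unfolding \<Phi>_def by simp
  have spreads: "\<exists>\<delta>>0. \<forall>x\<in>X. P - \<delta> < \<Phi> x \<longrightarrow> (\<forall>z. E x z \<longrightarrow> P - e < \<Phi> z)"
    if "0 < e" for e
    using perturbed_difference_near_max_spreads[OF bounded B(1) \<eta>(1) _ le_P[unfolded \<Phi>_def] that]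
      lap f_nonneg unfolding \<Phi>_def by simp
  obtain \<epsilon> where "0 < \<epsilon>" "\<forall>x\<in>layer E X N. \<Phi> x \<le> P - \<epsilon>"
    using layer_bounded_away_from_sup[OF outside _ spreads] c by (metis half_gt_zero)
  then have "P \<le> P - \<epsilon>" unfolding P_def layer_N by (intro cSUP_least) (auto simp: P_def)
  then show False using \<open>0 < \<epsilon>\<close> by simp
qed

lemma dirichlet_solution_exists:
  assumes sym: "\<And>x y. E x y \<Longrightarrow> E y x" and irrefl: "\<And>x. \<not> E x x"
    and layer_N: "layer E X N = UNIV"
    and f_bd: "bounded_on X f" and g_bd: "bounded_on (- X) g"
  shows "\<exists>u. dirichlet_solution E X f g u"
proof -
  obtain F G where F: "0 \<le> F" "\<And>x. x \<in> X \<Longrightarrow> \<bar>f x\<bar> \<le> F"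
    and G: "0 \<le> G" "\<And>y. y \<notin> X \<Longrightarrow> \<bar>g y\<bar> \<le> G"
  proof -
    obtain F G where "\<forall>x\<in>X. \<bar>f x\<bar> \<le> F" "\<forall>y\<in>- X. \<bar>g y\<bar> \<le> G"
      using f_bd g_bd unfolding bounded_on_def by blast
    then show thesis by (intro that[of "max 0 F" "max 0 G"]) (auto simp: le_max_iff_disj)
  qed
  obtain a where a: "bounded_fun a" "\<And>x. x \<in> X \<Longrightarrow> f x \<le> inf_laplacian E a x" "\<And>x. a x \<le> - G"
    using subsolution_barrier[OF layer_N sym F(1), of f "- G"] F(2) abs_le_D1 by blast
  obtain b where b: "bounded_fun b" "\<And>x. x \<in> X \<Longrightarrow> - f x \<le> inf_laplacian E b x" "\<And>x. b x \<le> - G"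
    using subsolution_barrier[OF layer_N sym F(1), of "\<lambda>x. - f x" "- G"] F(2) abs_le_D2 by blast
  show ?thesis
  proof (rule exI, rule perron_method[OF irrefl a(1,2), where U = "\<lambda>x. - b x"])
    show "a y \<le> g y" "g y \<le> - b y" if "y \<notin> X" for y
      using a(3)[of y] b(3)[of y] G(2)[OF that] by (simp_all add: abs_le_iff)
    show "inf_laplacian E (\<lambda>x. - b x) x \<le> f x" if "x \<in> X" for x
      using b(2)[OF that] by (simp add: inf_laplacian_uminus)
    show "a x \<le> - b x" for x using a(3)[of x] b(3)[of x] G(1) by simp
  qed (use bounded_fun_uminus[OF b(1)] in simp_all)
qed

lemma dirichlet_solution_unique:
  assumes layer_N: "layer E X N = UNIV"
    and sign: "(\<forall>x\<in>X. 0 \<le> f x) \<or> (\<forall>x\<in>X. f x \<le> 0)"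
    and u: "dirichlet_solution E X f g u" and v: "dirichlet_solution E X f g v"
  shows "u = v"
proof
  fix m
  from sign show "u m = v m"
  proof
    assume "\<forall>x\<in>X. 0 \<le> f x"
    then have "u m \<le> v m" "v m \<le> u m"
      using u v dirichlet_solution_le[OF layer_N, where f = f] by blast+
    then show ?thesis by simp
  next
    assume "\<forall>x\<in>X. f x \<le> 0"
    then have "- u m \<le> - v m" "- v m \<le> - u m"
      using u v dirichlet_solution_le[OF layer_N dirichlet_solution_uminus dirichlet_solution_uminus]
      by auto
    then show ?thesis by simp
  qed
qed

theorem theorem1p1:
  fixes E :: "'a \<Rightarrow> 'a \<Rightarrow> bool" and X :: "'a set" and f g :: "'a \<Rightarrow> real"
  assumes sym: "\<And>x y. E x y \<Longrightarrow> E y x"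
    and irrefl: "\<And>x. \<not> E x x"
    and width: "gwidth E X < \<infinity>"
    and f_bd: "bounded_on X f"
    and g_bd: "bounded_on (- X) g"
  shows "(\<exists>u. dirichlet_solution E X f g u) \<and>
         (((\<forall>x\<in>X. f x \<ge> 0) \<or> (\<forall>x\<in>X. f x \<le> 0)) \<longrightarrow>
            (\<forall>u v. dirichlet_solution E X f g u \<and> dirichlet_solution E X f g v \<longrightarrow> u = v))"
proof -
  obtain N where layer_N: "layer E X N = UNIV"
    using gwidth_finite_imp_layer_UNIV[OF sym width] .
  show ?thesis
    using dirichlet_solution_exists[OF sym irrefl layer_N f_bd g_bd]
      dirichlet_solution_unique[OF layer_N] by blast
qed

end
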